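(* Consider the stochastic process $(S_t, A_t, R_{t+1})_{t\in\mathbb{Z}}$ generated by following a behavior policy $\mu$ in a Markov decision process, with target policy $\pi$, importance sampling ratios $\rho_t = \pi(S_t,A_t)/\mu(S_t,A_t)$, state-based discount $\gamma_t=\gamma(S_t)\in[0,1]$, state-based trace parameter $\lambda_t=\lambda(S_t)\in[0,1]$, a second trace function $\bar\lambda:\mathcal{S}\to[0,1]$ with $\bar\lambda_t=\bar\lambda(S_t)$, feature vectors $\mathbf{x}_t=\mathbf{x}(S_t)\in\mathbb{R}^n$, a fixed main weight vector $\mathbf{w}\in\mathbb{R}^n$ and a fixed weight vector $\mathbf{w}^{\mathrm{sq}}\in\mathbb{R}^n$. Define $\bar G_t = R_{t+1}+\gamma_{t+1}(1-\lambda_{t+1})\mathbf{x}_{t+1}^\top\mathbf{w}$, the $\lambda$-return $G^\lambda_t=\rho_t(\bar G_t+\gamma_{t+1}\lambda_{t+1}G^\lambda_{t+1})$, $\bar r_{t+1}=\rho_t^2\bar G_t^2+2\rho_t^2\gamma_{t+1}\lambda_{t+1}\bar G_t G^\lambda_{t+1}$, $\bar\gamma_{t+1}=\rho_t^2\gamma_{t+1}^2\lambda_{t+1}^2$, the $\bar\lambda$-squared-return $\bar V^{\bar\lambda}_t=\bar r_{t+1}+\bar\gamma_{t+1}\big((1-\bar\lambda_{t+1})\mathbf{x}_{t+1}^\top\mathbf{w}^{\mathrm{sq}}+\bar\lambda_{t+1}\bar V^{\bar\lambda}_{t+1}\big)$, and $\delta^{\bar\lambda}_t=\bar V^{\bar\lambda}_t-\mathbf{x}_t^\top\mathbf{w}^{\mathrm{sq}}$.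 Let $\bar g_{t+1}$ be an unbiased estimate of $\mathbb{E}[G^\lambda_{t+1}\mid S_{t+1}]$, i.e. $\mathbb{E}[\bar g_{t+1}\mid \mathcal{F}_{t+1}]=\mathbb{E}[G^\lambda_{t+1}\mid S_{t+1}]$, where $\mathcal{F}_{t+1}$ is the history $(\ldots,S_t,A_t,R_{t+1},S_{t+1})$ (and similarly at every time step). Define $\bar\delta_t=(\rho_t^2\bar G_t^2+2\rho_t^2\gamma_{t+1}\lambda_{t+1}\bar G_t\bar g_{t+1})+\bar\gamma_{t+1}\mathbf{x}_{t+1}^\top\mathbf{w}^{\mathrm{sq}}-\mathbf{x}_t^\top\mathbf{w}^{\mathrm{sq}}$ and the trace $\bar{\mathbf{z}}_t=\mathbf{x}_t+\bar\gamma_t\bar\lambda_t\bar{\mathbf{z}}_{t-1}$. Then $$\mathbb{E}[\delta^{\bar\lambda}_t\mathbf{x}_t]=\mathbb{E}[\bar\delta_t\bar{\mathbf{z}}_t].$$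
   Context: Expectations $\mathbb{E}$ are taken with respect to the stationary behavior of the process induced by following $\mu$ (so expectations of time-shifted quantities coincide), and all quantities involved (the recursively defined returns and the trace) are assumed well defined with finite expectations. The MDP has finite state set $\mathcal{S}$, action set $\mathcal{A}$, transition kernel $P$; the Markov property holds. *)

theory Defs
  imports "HOL-Probability.Probability"
begin

text \<open>
  Process conventions: S t, A t are the state and action at time t (t :: int);
  R t is the reward received at time t, so the paper's R_{t+1} is R (t+1).
\<close>

definition rho ::
  "('s \<Rightarrow> 'a \<Rightarrow> real) \<Rightarrow> ('s \<Rightarrow> 'a \<Rightarrow> real) \<Rightarrow> (int \<Rightarrow> 'w \<Rightarrow> 's) \<Rightarrow> (int \<Rightarrow> 'w \<Rightarrow> 'a)
   \<Rightarrow> int \<Rightarrow> 'w \<Rightarrow> real" where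
  "rho ppi mu S A t \<omega> = ppi (S t \<omega>) (A t \<omega>) / mu (S t \<omega>) (A t \<omega>)"

definition Gbar ::
  "('s \<Rightarrow> real) \<Rightarrow> ('s \<Rightarrow> real) \<Rightarrow> ('s \<Rightarrow> real^'n) \<Rightarrow> real^'n \<Rightarrow> (int \<Rightarrow> 'w \<Rightarrow> 's)
   \<Rightarrow> (int \<Rightarrow> 'w \<Rightarrow> real) \<Rightarrow> int \<Rightarrow> 'w \<Rightarrow> real" where
  "Gbar gam lam x w S R t \<omega> =
     R (t+1) \<omega> + gam (S (t+1) \<omega>) * (1 - lam (S (t+1) \<omega>)) * (x (S (t+1) \<omega>) \<bullet> w)"

text \<open>k-th term of the unrolled lambda-return
  G^lambda_t = rho_t (Gbar_t + gamma_{t+1} lambda_{t+1} G^lambda_{t+1}).\<close>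
definition Glam_term where
  "Glam_term ppi mu gam lam x w S A R t \<omega> (k::nat) =
     (\<Prod>j<k. rho ppi mu S A (t + int j) \<omega> * gam (S (t + int j + 1) \<omega>) * lam (S (t + int j + 1) \<omega>))
     * rho ppi mu S A (t + int k) \<omega> * Gbar gam lam x w S R (t + int k) \<omega>"

definition Glam where
  "Glam ppi mu gam lam x w S A R t \<omega> = (\<Sum>k. Glam_term ppi mu gam lam x w S A R t \<omega> k)"

text \<open>rbar t is the paper's \<open>r\<close>-bar with index t, i.e.
  rbar_{t} = rho_{t-1}^2 Gbar_{t-1}^2 + 2 rho_{t-1}^2 gamma_t lambda_t Gbar_{t-1} G^lambda_t.\<close>
definition rbar where
  "rbar ppi mu gam lam x w S A R t \<omega> =
     (rho ppi mu S A (t-1) \<omega>)\<^sup>2 * (Gbar gam lam x w S R (t-1) \<omega>)\<^sup>2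
     + 2 * (rho ppi mu S A (t-1) \<omega>)\<^sup>2 * gam (S t \<omega>) * lam (S t \<omega>)
         * Gbar gam lam x w S R (t-1) \<omega> * Glam ppi mu gam lam x w S A R t \<omega>"

text \<open>gambar t is the paper's gamma-bar with index t: rho_{t-1}^2 gamma_t^2 lambda_t^2.\<close>
definition gambar where
  "gambar ppi mu gam lam S A t \<omega> =
     (rho ppi mu S A (t-1) \<omega>)\<^sup>2 * (gam (S t \<omega>))\<^sup>2 * (lam (S t \<omega>))\<^sup>2"

text \<open>k-th term of the unrolled lambda-bar squared return
  Vbar_t = rbar_{t+1} + gambar_{t+1}((1-lamb_{t+1}) x_{t+1}^T wsq + lamb_{t+1} Vbar_{t+1}).\<close>
definition Vbar_term where
  "Vbar_term ppi mu gam lam lamb x w wsq S A R t \<omega> (k::nat) =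
     (\<Prod>j<k. gambar ppi mu gam lam S A (t + int j + 1) \<omega> * lamb (S (t + int j + 1) \<omega>))
     * (rbar ppi mu gam lam x w S A R (t + int k + 1) \<omega>
        + gambar ppi mu gam lam S A (t + int k + 1) \<omega> * (1 - lamb (S (t + int k + 1) \<omega>))
            * (x (S (t + int k + 1) \<omega>) \<bullet> wsq))"

definition Vbar where
  "Vbar ppi mu gam lam lamb x w wsq S A R t \<omega> =
     (\<Sum>k. Vbar_term ppi mu gam lam lamb x w wsq S A R t \<omega> k)"

definition delta_lamb where
  "delta_lamb ppi mu gam lam lamb x w wsq S A R t \<omega> =
     Vbar ppi mu gam lam lamb x w wsq S A R t \<omega> - x (S t \<omega>) \<bullet> wsq"

text \<open>deltabar_t, with gb the estimate process (gb (t+1) is the paper's g-bar_{t+1}).\<close>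
definition delta_bar where
  "delta_bar ppi mu gam lam x w wsq S A R gb t \<omega> =
     ((rho ppi mu S A t \<omega>)\<^sup>2 * (Gbar gam lam x w S R t \<omega>)\<^sup>2
      + 2 * (rho ppi mu S A t \<omega>)\<^sup>2 * gam (S (t+1) \<omega>) * lam (S (t+1) \<omega>)
          * Gbar gam lam x w S R t \<omega> * gb (t+1) \<omega>)
     + gambar ppi mu gam lam S A (t+1) \<omega> * (x (S (t+1) \<omega>) \<bullet> wsq)
     - x (S t \<omega>) \<bullet> wsq"

text \<open>Unrolled trace zbar_t = x_t + gambar_t lamb_t zbar_{t-1}
  = sum_k (prod_{j<k} gambar_{t-j} lamb_{t-j}) x_{t-k}.\<close>
definition trace_coef where
  "trace_coef ppi mu gam lam lamb S A t \<omega> (k::nat) =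
     (\<Prod>j<k. gambar ppi mu gam lam S A (t - int j) \<omega> * lamb (S (t - int j) \<omega>))"

definition zbar :: "_ \<Rightarrow> _ \<Rightarrow> _ \<Rightarrow> _ \<Rightarrow> _ \<Rightarrow> ('s \<Rightarrow> real^'n) \<Rightarrow> _ \<Rightarrow> _ \<Rightarrow> int \<Rightarrow> _ \<Rightarrow> real^'n" where
  "zbar ppi mu gam lam lamb x S A t \<omega> =
     (\<Sum>k. trace_coef ppi mu gam lam lamb S A t \<omega> k *\<^sub>R x (S (t - int k) \<omega>))"

definition abs_trace where
  "abs_trace ppi mu gam lam lamb x S A t \<omega> =
     (\<Sum>k. \<bar>trace_coef ppi mu gam lam lamb S A t \<omega> k\<bar> * norm (x (S (t - int k) \<omega>)))"

definition gen_sigma ::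
  "'w measure \<Rightarrow> (int \<Rightarrow> 'w \<Rightarrow> 's) \<Rightarrow> (int \<Rightarrow> 'w \<Rightarrow> 'a) \<Rightarrow> (int \<Rightarrow> 'w \<Rightarrow> real)
   \<Rightarrow> int set \<Rightarrow> int set \<Rightarrow> int set \<Rightarrow> 'w measure" where
  "gen_sigma M S A R TS TA TR = sigma (space M)
     ({S s -` B \<inter> space M | s B. s \<in> TS}
      \<union> {A s -` B \<inter> space M | s B. s \<in> TA}
      \<union> {R s -` B \<inter> space M | s B. s \<in> TR \<and> B \<in> sets borel})"

text \<open>History F_t = (..., S_{t-1}, A_{t-1}, R_t, S_t).\<close>
definition hist where
  "hist M S A R t = gen_sigma M S A R {..t} {..<t} {..t}"

definition histA where
  "histA M S A R t = gen_sigma M S A R {..t} {..t} {..t}"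

definition state_sigma where
  "state_sigma M S A R t = gen_sigma M S A R {t} {} {}"

definition future where
  "future M S A R t = gen_sigma M S A R {t..} {t..} {t<..}"

end

theory Submission
  imports Defs
begin

text \<open>
  Write \<open>\<delta>\<^sub>t\<close> for \<open>delta_lamb\<^sub>t\<close> and \<open>\<delta>bar*\<^sub>t\<close> for \<open>\<delta>bar\<^sub>t\<close> with the estimate \<open>gbar\<^sub>t\<^sub>+\<^sub>1\<close> replaced by the
  true \<open>\<lambda>\<close>-return \<open>G\<^sup>\<lambda>\<^sub>t\<^sub>+\<^sub>1\<close>. Unrolling the definitions gives the forward recursion
  \<open>\<delta>\<^sub>t = \<delta>bar*\<^sub>t + gambar\<^sub>t\<^sub>+\<^sub>1 lambar\<^sub>t\<^sub>+\<^sub>1 \<delta>\<^sub>t\<^sub>+\<^sub>1\<close>, while the trace is the series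
  \<open>zbar\<^sub>t = \<Sum>\<^sub>k c\<^sub>k x\<^sub>t\<^sub>-\<^sub>k\<close> whose coefficients obey the matching backward recursion.
  Shifting time by one step preserves the law of the process, so the recursion turns
  \<open>E[\<delta>\<^sub>t c\<^sub>k x\<^sub>t\<^sub>-\<^sub>k] - E[\<delta>\<^sub>t c\<^sub>k\<^sub>+\<^sub>1 x\<^sub>t\<^sub>-\<^sub>k\<^sub>-\<^sub>1]\<close> into \<open>E[\<delta>bar*\<^sub>t c\<^sub>k x\<^sub>t\<^sub>-\<^sub>k]\<close>; summing over \<open>k\<close>
  telescopes to \<open>E[\<delta>\<^sub>t x\<^sub>t] = E[\<delta>bar*\<^sub>t zbar\<^sub>t]\<close>, the tails being controlled by dominated
  convergence. Finally, \<open>\<delta>bar\<^sub>t zbar\<^sub>t - \<delta>bar*\<^sub>t zbar\<^sub>t\<close> is the estimation error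
  \<open>gbar\<^sub>t\<^sub>+\<^sub>1 - G\<^sup>\<lambda>\<^sub>t\<^sub>+\<^sub>1\<close> times a quantity known at time \<open>t+1\<close>; unbiasedness and the Markov
  property give both the same conditional expectation given \<open>F\<^sub>t\<^sub>+\<^sub>1\<close>, so this difference has
  expectation zero.
\<close>

section \<open>Dominated series of integrals\<close>

context
  fixes M :: "'w measure" and a :: "'w \<Rightarrow> real" and f :: "nat \<Rightarrow> 'w \<Rightarrow> 'b::{banach, second_countable_topology}"
  assumes a_meas: "a \<in> borel_measurable M"
    and f_meas: "\<And>k. f k \<in> borel_measurable M"
    and summable_norm_f: "\<And>\<omega>. \<omega> \<in> space M \<Longrightarrow> summable (\<lambda>k. norm (f k \<omega>))"
    and integrable_dominant: "integrable M (\<lambda>\<omega>. \<bar>a \<omega>\<bar> * (\<Sum>k. norm (f k \<omega>)))"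
begin

lemma norm_partial_sum_le_dominant:
  assumes "\<omega> \<in> space M" "finite K"
  shows "norm (a \<omega> *\<^sub>R (\<Sum>k\<in>K. f k \<omega>)) \<le> \<bar>a \<omega>\<bar> * (\<Sum>k. norm (f k \<omega>))"
proof -
  have "norm (\<Sum>k\<in>K. f k \<omega>) \<le> (\<Sum>k\<in>K. norm (f k \<omega>))" by (rule norm_sum)
  also have "\<dots> \<le> (\<Sum>k. norm (f k \<omega>))"
    using assms summable_norm_f by (intro sum_le_suminf) auto
  finally show ?thesis by (simp add: mult_left_mono)
qed

lemma borel_measurable_scaleR_terms:
  "(\<lambda>\<omega>. a \<omega> *\<^sub>R f k \<omega>) \<in> borel_measurable M"
  "(\<lambda>\<omega>. a \<omega> *\<^sub>R (\<Sum>k\<in>K. f k \<omega>)) \<in> borel_measurable M"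
  "(\<lambda>\<omega>. a \<omega> *\<^sub>R (\<Sum>k. f k \<omega>)) \<in> borel_measurable M"
  by (rule borel_measurable_scaleR[OF a_meas]; intro f_meas borel_measurable_sum borel_measurable_suminf)+

lemma dominant_nonneg:
  assumes "\<omega> \<in> space M"
  shows "0 \<le> \<bar>a \<omega>\<bar> * (\<Sum>k. norm (f k \<omega>))"
  using suminf_nonneg[OF summable_norm_f[OF assms]] by simp

lemma integrable_scaleR_dominated_term: "integrable M (\<lambda>\<omega>. a \<omega> *\<^sub>R f k \<omega>)"
proof (rule Bochner_Integration.integrable_bound[OF integrable_dominant])
  show "AE \<omega> in M. norm (a \<omega> *\<^sub>R f k \<omega>) \<le> norm (\<bar>a \<omega>\<bar> * (\<Sum>k. norm (f k \<omega>)))"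
  proof (rule AE_I2)
    fix \<omega> assume \<omega>: "\<omega> \<in> space M"
    show "norm (a \<omega> *\<^sub>R f k \<omega>) \<le> norm (\<bar>a \<omega>\<bar> * (\<Sum>k. norm (f k \<omega>)))"
      using norm_partial_sum_le_dominant[OF \<omega>, of "{k}"] dominant_nonneg[OF \<omega>] by simp
  qed
qed (simp_all add: borel_measurable_scaleR_terms)

lemma integral_scaleR_dominated_term_tendsto_0: "(\<lambda>k. \<integral>\<omega>. a \<omega> *\<^sub>R f k \<omega> \<partial>M) \<longlonglongrightarrow> 0"
proof -
  have "(\<lambda>k. \<integral>\<omega>. a \<omega> *\<^sub>R f k \<omega> \<partial>M) \<longlonglongrightarrow> (\<integral>\<omega>. 0 \<partial>M)"
  proof (rule integral_dominated_convergence[OF _ _ integrable_dominant])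
    show "AE \<omega> in M. (\<lambda>k. a \<omega> *\<^sub>R f k \<omega>) \<longlonglongrightarrow> 0"
    proof (rule AE_I2)
      fix \<omega> assume "\<omega> \<in> space M"
      then have "(\<lambda>k. f k \<omega>) \<longlonglongrightarrow> 0"
        by (intro tendsto_norm_zero_cancel[OF summable_LIMSEQ_zero] summable_norm_f)
      from tendsto_scaleR[OF tendsto_const this]
      show "(\<lambda>k. a \<omega> *\<^sub>R f k \<omega>) \<longlonglongrightarrow> 0"
        by simp
    qed
    show "AE \<omega> in M. norm (a \<omega> *\<^sub>R f k \<omega>) \<le> \<bar>a \<omega>\<bar> * (\<Sum>k. norm (f k \<omega>))" for k
      using norm_partial_sum_le_dominant[of _ "{k}"] by (intro AE_I2) auto
  qed (simp_all add: borel_measurable_scaleR_terms)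
  then show ?thesis by simp
qed

lemma integral_scaleR_dominated_series_sums:
  "(\<lambda>k. \<integral>\<omega>. a \<omega> *\<^sub>R f k \<omega> \<partial>M) sums (\<integral>\<omega>. a \<omega> *\<^sub>R (\<Sum>k. f k \<omega>) \<partial>M)"
  unfolding sums_def
proof -
  have "(\<lambda>K. \<integral>\<omega>. a \<omega> *\<^sub>R (\<Sum>k<K. f k \<omega>) \<partial>M) \<longlonglongrightarrow> (\<integral>\<omega>. a \<omega> *\<^sub>R (\<Sum>k. f k \<omega>) \<partial>M)"
  proof (rule integral_dominated_convergence[OF _ _ integrable_dominant])
    show "AE \<omega> in M. (\<lambda>K. a \<omega> *\<^sub>R (\<Sum>k<K. f k \<omega>)) \<longlonglongrightarrow> a \<omega> *\<^sub>R (\<Sum>k. f k \<omega>)"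
      using summable_norm_f by (intro AE_I2 tendsto_scaleR tendsto_const summable_LIMSEQ) (rule summable_norm_cancel)
    show "AE \<omega> in M. norm (a \<omega> *\<^sub>R (\<Sum>k<K. f k \<omega>)) \<le> \<bar>a \<omega>\<bar> * (\<Sum>k. norm (f k \<omega>))" for K
      using norm_partial_sum_le_dominant by (intro AE_I2) auto
  qed (simp_all add: borel_measurable_scaleR_terms)
  moreover have "(\<integral>\<omega>. a \<omega> *\<^sub>R (\<Sum>k<K. f k \<omega>) \<partial>M) = (\<Sum>k<K. \<integral>\<omega>. a \<omega> *\<^sub>R f k \<omega> \<partial>M)" for K
    using integrable_scaleR_dominated_term
    by (simp add: scaleR_sum_right Bochner_Integration.integral_sum)
  ultimately show "(\<lambda>K. \<Sum>k<K. \<integral>\<omega>. a \<omega> *\<^sub>R f k \<omega> \<partial>M) \<longlonglongrightarrow> (\<integral>\<omega>. a \<omega> *\<^sub>R (\<Sum>k. f k \<omega>) \<partial>M)"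
    by simp
qed

end

section \<open>Forward and backward views of a stationary process\<close>

text \<open>By shift invariance, \<open>E[d c\<^sub>k\<^sub>+\<^sub>1 v\<^sub>k\<^sub>+\<^sub>1] = E[(d - a) c\<^sub>k v\<^sub>k]\<close>, so the terms of the
  backward view telescope to the forward view.\<close>

lemma stationary_forward_view_eq_backward_view:
  fixes theta :: "'w \<Rightarrow> 'w" and d a b :: "'w \<Rightarrow> real" and c :: "nat \<Rightarrow> 'w \<Rightarrow> real"
    and v :: "nat \<Rightarrow> 'w \<Rightarrow> 'b::{banach, second_countable_topology}"
  assumes theta_meas: "theta \<in> M \<rightarrow>\<^sub>M M" and theta_preserving: "distr M M theta = M"
    and d_meas: "d \<in> borel_measurable M" and a_meas: "a \<in> borel_measurable M"
    and c_meas: "\<And>k. c k \<in> borel_measurable M"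
    and v_meas: "\<And>k. v k \<in> borel_measurable M"
    and d_rec: "\<And>\<omega>. \<omega> \<in> space M \<Longrightarrow> d \<omega> = a \<omega> + b \<omega> * d (theta \<omega>)"
    and c_0: "\<And>\<omega>. \<omega> \<in> space M \<Longrightarrow> c 0 \<omega> = 1"
    and c_Suc: "\<And>k \<omega>. \<omega> \<in> space M \<Longrightarrow> c (Suc k) (theta \<omega>) = b \<omega> * c k \<omega>"
    and v_Suc: "\<And>k \<omega>. \<omega> \<in> space M \<Longrightarrow> v (Suc k) (theta \<omega>) = v k \<omega>"
    and summable_trace: "\<And>\<omega>. \<omega> \<in> space M \<Longrightarrow> summable (\<lambda>k. \<bar>c k \<omega>\<bar> * norm (v k \<omega>))"
    and integrable_d: "integrable M (\<lambda>\<omega>. \<bar>d \<omega>\<bar> * (\<Sum>k. \<bar>c k \<omega>\<bar> * norm (v k \<omega>)))"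
    and integrable_a: "integrable M (\<lambda>\<omega>. \<bar>a \<omega>\<bar> * (\<Sum>k. \<bar>c k \<omega>\<bar> * norm (v k \<omega>)))"
  shows "(\<integral>\<omega>. d \<omega> *\<^sub>R v 0 \<omega> \<partial>M) = (\<integral>\<omega>. a \<omega> *\<^sub>R (\<Sum>k. c k \<omega> *\<^sub>R v k \<omega>) \<partial>M)"
proof -
  define f where "f k \<omega> = c k \<omega> *\<^sub>R v k \<omega>" for k \<omega>
  define F where "F k = (\<integral>\<omega>. d \<omega> *\<^sub>R f k \<omega> \<partial>M)" for k
  have f_meas: "f k \<in> borel_measurable M" for k
    unfolding f_def by (intro borel_measurable_scaleR c_meas v_meas)
  have norm_f: "norm (f k \<omega>) = \<bar>c k \<omega>\<bar> * norm (v k \<omega>)" for k \<omega>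
    by (simp add: f_def)
  have summable_f: "summable (\<lambda>k. norm (f k \<omega>))" if "\<omega> \<in> space M" for \<omega>
    unfolding norm_f using summable_trace[OF that] .
  have dominated_d: "integrable M (\<lambda>\<omega>. \<bar>d \<omega>\<bar> * (\<Sum>k. norm (f k \<omega>)))"
    unfolding norm_f by (rule integrable_d)
  have dominated_a: "integrable M (\<lambda>\<omega>. \<bar>a \<omega>\<bar> * (\<Sum>k. norm (f k \<omega>)))"
    unfolding norm_f by (rule integrable_a)
  have integrable_d_f: "integrable M (\<lambda>\<omega>. d \<omega> *\<^sub>R f k \<omega>)" for k
    by (rule integrable_scaleR_dominated_term[OF d_meas f_meas summable_f dominated_d])
  have integrable_a_f: "integrable M (\<lambda>\<omega>. a \<omega> *\<^sub>R f k \<omega>)" for k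
    by (rule integrable_scaleR_dominated_term[OF a_meas f_meas summable_f dominated_a])
  have F_Suc: "F (Suc k) = F k - (\<integral>\<omega>. a \<omega> *\<^sub>R f k \<omega> \<partial>M)" for k
  proof -
    have "F (Suc k) = (\<integral>\<omega>. d (theta \<omega>) *\<^sub>R f (Suc k) (theta \<omega>) \<partial>M)"
      unfolding F_def by (subst (1) theta_preserving[symmetric], rule integral_distr[OF theta_meas])
        (intro borel_measurable_scaleR d_meas f_meas)
    also have "\<dots> = (\<integral>\<omega>. d \<omega> *\<^sub>R f k \<omega> - a \<omega> *\<^sub>R f k \<omega> \<partial>M)"
    proof (rule Bochner_Integration.integral_cong[OF refl])
      fix \<omega> assume \<omega>: "\<omega> \<in> space M"
      have "d \<omega> - a \<omega> = b \<omega> * d (theta \<omega>)" using d_rec[OF \<omega>] by simp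
      then show "d (theta \<omega>) *\<^sub>R f (Suc k) (theta \<omega>) = d \<omega> *\<^sub>R f k \<omega> - a \<omega> *\<^sub>R f k \<omega>"
        by (simp add: f_def c_Suc[OF \<omega>] v_Suc[OF \<omega>] scaleR_diff_left[symmetric] left_diff_distrib[symmetric])
    qed
    also have "\<dots> = F k - (\<integral>\<omega>. a \<omega> *\<^sub>R f k \<omega> \<partial>M)"
      unfolding F_def by (rule Bochner_Integration.integral_diff[OF integrable_d_f integrable_a_f])
    finally show ?thesis .
  qed
  have "(\<Sum>k<K. \<integral>\<omega>. a \<omega> *\<^sub>R f k \<omega> \<partial>M) = F 0 - F K" for K
    using sum_lessThan_telescope'[of F K] by (simp add: F_Suc)
  moreover have "(\<lambda>K. F 0 - F K) \<longlonglongrightarrow> F 0 - 0"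
    unfolding F_def
    by (intro tendsto_diff tendsto_const
        integral_scaleR_dominated_term_tendsto_0[OF d_meas f_meas summable_f dominated_d])
  ultimately have "(\<lambda>k. \<integral>\<omega>. a \<omega> *\<^sub>R f k \<omega> \<partial>M) sums F 0"
    by (simp add: sums_def)
  moreover have "(\<lambda>k. \<integral>\<omega>. a \<omega> *\<^sub>R f k \<omega> \<partial>M) sums (\<integral>\<omega>. a \<omega> *\<^sub>R (\<Sum>k. f k \<omega>) \<partial>M)"
    by (rule integral_scaleR_dominated_series_sums[OF a_meas f_meas summable_f dominated_a])
  ultimately have "F 0 = (\<integral>\<omega>. a \<omega> *\<^sub>R (\<Sum>k. f k \<omega>) \<partial>M)"
    by (rule sums_unique2)
  moreover have "F 0 = (\<integral>\<omega>. d \<omega> *\<^sub>R v 0 \<omega> \<partial>M)"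
    unfolding F_def f_def by (rule Bochner_Integration.integral_cong) (simp_all add: c_0)
  ultimately show ?thesis
    by (simp add: f_def)
qed

section \<open>Conditional expectations and generated \<open>\<sigma>\<close>-algebras\<close>

context sigma_finite_subalgebra
begin

lemma integral_mult_eq_of_real_cond_exp_eq:
  assumes f_meas: "f \<in> borel_measurable F"
    and g_meas: "g \<in> borel_measurable M" and h_meas: "h \<in> borel_measurable M"
    and integrable_g: "integrable M (\<lambda>\<omega>. f \<omega> * g \<omega>)"
    and integrable_h: "integrable M (\<lambda>\<omega>. f \<omega> * h \<omega>)"
    and cond_exp_eq: "AE \<omega> in M. real_cond_exp M F g \<omega> = real_cond_exp M F h \<omega>"
  shows "(\<integral>\<omega>. f \<omega> * g \<omega> \<partial>M) = (\<integral>\<omega>. f \<omega> * h \<omega> \<partial>M)"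
proof -
  have [measurable]: "f \<in> borel_measurable M"
    by (rule measurable_from_subalg[OF subalg f_meas])
  have "(\<integral>\<omega>. f \<omega> * g \<omega> \<partial>M) = (\<integral>\<omega>. f \<omega> * real_cond_exp M F g \<omega> \<partial>M)"
    by (rule real_cond_exp_intg(2)[OF integrable_g f_meas g_meas, symmetric])
  also have "\<dots> = (\<integral>\<omega>. f \<omega> * real_cond_exp M F h \<omega> \<partial>M)"
    using cond_exp_eq by (intro integral_cong_AE) auto
  also have "\<dots> = (\<integral>\<omega>. f \<omega> * h \<omega> \<partial>M)"
    by (rule real_cond_exp_intg(2)[OF integrable_h f_meas h_meas])
  finally show ?thesis .
qed

lemma integral_scaleR_eq_of_real_cond_exp_eq:
  fixes f :: "'a \<Rightarrow> 'b::euclidean_space"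
  assumes f_meas: "f \<in> borel_measurable F"
    and g_meas: "g \<in> borel_measurable M" and h_meas: "h \<in> borel_measurable M"
    and integrable_g: "integrable M (\<lambda>\<omega>. g \<omega> *\<^sub>R f \<omega>)"
    and integrable_h: "integrable M (\<lambda>\<omega>. h \<omega> *\<^sub>R f \<omega>)"
    and cond_exp_eq: "AE \<omega> in M. real_cond_exp M F g \<omega> = real_cond_exp M F h \<omega>"
  shows "(\<integral>\<omega>. g \<omega> *\<^sub>R f \<omega> \<partial>M) = (\<integral>\<omega>. h \<omega> *\<^sub>R f \<omega> \<partial>M)"
proof (rule euclidean_eqI)
  fix i :: 'b
  have coordinate: "(\<integral>\<omega>. k \<omega> *\<^sub>R f \<omega> \<partial>M) \<bullet> i = (\<integral>\<omega>. (f \<omega> \<bullet> i) * k \<omega> \<partial>M)"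
    if "integrable M (\<lambda>\<omega>. k \<omega> *\<^sub>R f \<omega>)" for k
    using integral_inner_left[OF that, of i] by (simp add: mult.commute)
  have f_i_meas: "(\<lambda>\<omega>. f \<omega> \<bullet> i) \<in> borel_measurable F"
    using f_meas by measurable
  have "(\<integral>\<omega>. (f \<omega> \<bullet> i) * g \<omega> \<partial>M) = (\<integral>\<omega>. (f \<omega> \<bullet> i) * h \<omega> \<partial>M)"
    using integrable_inner_left[OF integrable_g, of i] integrable_inner_left[OF integrable_h, of i]
    by (intro integral_mult_eq_of_real_cond_exp_eq[OF f_i_meas g_meas h_meas _ _ cond_exp_eq])
      (simp_all add: mult.commute)
  then show "(\<integral>\<omega>. g \<omega> *\<^sub>R f \<omega> \<partial>M) \<bullet> i = (\<integral>\<omega>. h \<omega> *\<^sub>R f \<omega> \<partial>M) \<bullet> i"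
    by (simp add: coordinate integrable_g integrable_h)
qed

end

lemma space_gen_sigma [simp]: "space (gen_sigma M S A R TS TA TR) = space M"
  unfolding gen_sigma_def by (simp add: space_measure_of_conv)

lemma sets_gen_sigma: "sets (gen_sigma M S A R TS TA TR) = sigma_sets (space M)
     ({S s -` B \<inter> space M | s B. s \<in> TS}
      \<union> {A s -` B \<inter> space M | s B. s \<in> TA}
      \<union> {R s -` B \<inter> space M | s B. s \<in> TR \<and> B \<in> sets borel})"
  unfolding gen_sigma_def by (rule sets_measure_of) auto

lemma subalgebra_gen_sigma:
  assumes S_meas: "\<And>s. S s \<in> M \<rightarrow>\<^sub>M count_space UNIV"
    and A_meas: "\<And>s. A s \<in> M \<rightarrow>\<^sub>M count_space UNIV"
    and R_meas: "\<And>s. R s \<in> borel_measurable M"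
  shows "subalgebra M (gen_sigma M S A R TS TA TR)"
proof -
  have "{S s -` B \<inter> space M | s B. s \<in> TS}
      \<union> {A s -` B \<inter> space M | s B. s \<in> TA}
      \<union> {R s -` B \<inter> space M | s B. s \<in> TR \<and> B \<in> sets borel} \<subseteq> sets M"
    using measurable_sets[OF S_meas] measurable_sets[OF A_meas] measurable_sets[OF R_meas] by auto
  then show ?thesis
    unfolding subalgebra_def space_gen_sigma sets_gen_sigma by (simp add: sets.sigma_sets_subset)
qed

lemma measurable_gen_sigma_S:
  assumes "s \<in> TS"
  shows "S s \<in> gen_sigma M S A R TS TA TR \<rightarrow>\<^sub>M count_space UNIV"
proof (rule measurableI)
  show "S s -` B \<inter> space (gen_sigma M S A R TS TA TR) \<in> sets (gen_sigma M S A R TS TA TR)" for B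
    unfolding space_gen_sigma sets_gen_sigma using assms by (intro sigma_sets.Basic UnI1) blast
qed simp

lemma measurable_gen_sigma_A:
  assumes "s \<in> TA"
  shows "A s \<in> gen_sigma M S A R TS TA TR \<rightarrow>\<^sub>M count_space UNIV"
proof (rule measurableI)
  show "A s -` B \<inter> space (gen_sigma M S A R TS TA TR) \<in> sets (gen_sigma M S A R TS TA TR)" for B
    unfolding space_gen_sigma sets_gen_sigma using assms by (intro sigma_sets.Basic UnI1[OF UnI2]) blast
qed simp

lemma measurable_gen_sigma_R:
  assumes "s \<in> TR"
  shows "R s \<in> borel_measurable (gen_sigma M S A R TS TA TR)"
proof (rule measurableI)
  show "R s -` B \<inter> space (gen_sigma M S A R TS TA TR) \<in> sets (gen_sigma M S A R TS TA TR)"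
    if "B \<in> sets borel" for B
    unfolding space_gen_sigma sets_gen_sigma using assms that by (intro sigma_sets.Basic UnI2) blast
qed simp

lemma borel_measurable_rho:
  fixes S :: "int \<Rightarrow> 'w \<Rightarrow> 's::finite" and A :: "int \<Rightarrow> 'w \<Rightarrow> 'a::finite"
  assumes [measurable]: "S s \<in> N \<rightarrow>\<^sub>M count_space UNIV" "A s \<in> N \<rightarrow>\<^sub>M count_space UNIV"
  shows "rho ppi mu S A s \<in> borel_measurable N"
  unfolding rho_def by measurable

lemma borel_measurable_Gbar:
  fixes S :: "int \<Rightarrow> 'w \<Rightarrow> 's::finite"
  assumes [measurable]: "S (s+1) \<in> N \<rightarrow>\<^sub>M count_space UNIV" "R (s+1) \<in> borel_measurable N"
  shows "Gbar gam lam x w S R s \<in> borel_measurable N"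
  unfolding Gbar_def by measurable

lemma borel_measurable_gambar:
  fixes S :: "int \<Rightarrow> 'w \<Rightarrow> 's::finite" and A :: "int \<Rightarrow> 'w \<Rightarrow> 'a::finite"
  assumes "S (s-1) \<in> N \<rightarrow>\<^sub>M count_space UNIV" "A (s-1) \<in> N \<rightarrow>\<^sub>M count_space UNIV"
    and [measurable]: "S s \<in> N \<rightarrow>\<^sub>M count_space UNIV"
  shows "gambar ppi mu gam lam S A s \<in> borel_measurable N"
proof -
  have [measurable]: "rho ppi mu S A (s-1) \<in> borel_measurable N"
    using assms(1,2) by (rule borel_measurable_rho)
  show ?thesis unfolding gambar_def by measurable
qed

lemma borel_measurable_Glam:
  fixes S :: "int \<Rightarrow> 'w \<Rightarrow> 's::finite" and A :: "int \<Rightarrow> 'w \<Rightarrow> 'a::finite"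
  assumes S_meas: "\<And>k. S (t + int k) \<in> N \<rightarrow>\<^sub>M count_space UNIV"
    and A_meas: "\<And>k. A (t + int k) \<in> N \<rightarrow>\<^sub>M count_space UNIV"
    and R_meas: "\<And>k. R (t + int k + 1) \<in> borel_measurable N"
  shows "Glam ppi mu gam lam x w S A R t \<in> borel_measurable N"
proof -
  have S_Suc_meas [measurable]: "S (t + int k + 1) \<in> N \<rightarrow>\<^sub>M count_space UNIV" for k
    using S_meas[of "Suc k"] by (simp add: ac_simps)
  have [measurable]: "rho ppi mu S A (t + int k) \<in> borel_measurable N" for k
    using S_meas A_meas by (rule borel_measurable_rho)
  have [measurable]: "Gbar gam lam x w S R (t + int k) \<in> borel_measurable N" for k
    using S_Suc_meas R_meas by (rule borel_measurable_Gbar)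
  show ?thesis unfolding Glam_def Glam_term_def by measurable
qed

lemma borel_measurable_trace_coef:
  fixes S :: "int \<Rightarrow> 'w \<Rightarrow> 's::finite" and A :: "int \<Rightarrow> 'w \<Rightarrow> 'a::finite"
  assumes S_meas: "\<And>j. S (t - int j) \<in> N \<rightarrow>\<^sub>M count_space UNIV"
    and A_meas: "\<And>j. A (t - int j - 1) \<in> N \<rightarrow>\<^sub>M count_space UNIV"
  shows "(\<lambda>\<omega>. trace_coef ppi mu gam lam lamb S A t \<omega> k) \<in> borel_measurable N"
proof -
  have [measurable]: "gambar ppi mu gam lam S A (t - int j) \<in> borel_measurable N" for j
    using S_meas[of "Suc j"] A_meas[of j] S_meas[of j]
    by (intro borel_measurable_gambar) (simp_all add: algebra_simps)
  have [measurable]: "S (t - int j) \<in> N \<rightarrow>\<^sub>M count_space UNIV" for j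
    by (rule S_meas)
  show ?thesis unfolding trace_coef_def by measurable
qed

lemma borel_measurable_zbar:
  fixes S :: "int \<Rightarrow> 'w \<Rightarrow> 's::finite" and A :: "int \<Rightarrow> 'w \<Rightarrow> 'a::finite"
  assumes S_meas: "\<And>j. S (t - int j) \<in> N \<rightarrow>\<^sub>M count_space UNIV"
    and A_meas: "\<And>j. A (t - int j - 1) \<in> N \<rightarrow>\<^sub>M count_space UNIV"
  shows "zbar ppi mu gam lam lamb x S A t \<in> borel_measurable N"
proof -
  have [measurable]: "(\<lambda>\<omega>. trace_coef ppi mu gam lam lamb S A t \<omega> k) \<in> borel_measurable N" for k
    using S_meas A_meas by (rule borel_measurable_trace_coef)
  have [measurable]: "S (t - int j) \<in> N \<rightarrow>\<^sub>M count_space UNIV" for j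
    by (rule S_meas)
  show ?thesis unfolding zbar_def by measurable
qed

lemma Vbar_term_shift:
  assumes "\<And>s. S s \<omega>' = S (s+1) \<omega>" "\<And>s. A s \<omega>' = A (s+1) \<omega>" "\<And>s. R s \<omega>' = R (s+1) \<omega>"
  shows "Vbar_term ppi mu gam lam lamb x w wsq S A R t \<omega>' k
    = Vbar_term ppi mu gam lam lamb x w wsq S A R (t+1) \<omega> k"
  unfolding Vbar_term_def rbar_def Glam_def Glam_term_def gambar_def rho_def Gbar_def
  by (simp add: assms algebra_simps)

lemma trace_coef_shift:
  assumes "\<And>s. S s \<omega>' = S (s+1) \<omega>" "\<And>s. A s \<omega>' = A (s+1) \<omega>"
  shows "trace_coef ppi mu gam lam lamb S A t \<omega>' k = trace_coef ppi mu gam lam lamb S A (t+1) \<omega> k"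
  unfolding trace_coef_def gambar_def rho_def by (simp add: assms algebra_simps)

lemma Vbar_term_Suc:
  "Vbar_term ppi mu gam lam lamb x w wsq S A R t \<omega> (Suc k)
   = gambar ppi mu gam lam S A (t+1) \<omega> * lamb (S (t+1) \<omega>)
     * Vbar_term ppi mu gam lam lamb x w wsq S A R (t+1) \<omega> k"
  unfolding Vbar_term_def by (simp only: prod.lessThan_Suc_shift) (simp add: algebra_simps)

lemma trace_coef_Suc:
  "trace_coef ppi mu gam lam lamb S A t \<omega> (Suc k)
   = gambar ppi mu gam lam S A t \<omega> * lamb (S t \<omega>) * trace_coef ppi mu gam lam lamb S A (t-1) \<omega> k"
  unfolding trace_coef_def by (simp only: prod.lessThan_Suc_shift) (simp add: algebra_simps)

section \<open>The squared-return process\<close>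

locale squared_return_process =
  fixes M :: "'w measure"
    and S :: "int \<Rightarrow> 'w \<Rightarrow> 's::finite"
    and A :: "int \<Rightarrow> 'w \<Rightarrow> 'a::finite"
    and R :: "int \<Rightarrow> 'w \<Rightarrow> real"
    and ppi mu :: "'s \<Rightarrow> 'a \<Rightarrow> real"
    and gam lam lamb :: "'s \<Rightarrow> real"
    and x :: "'s \<Rightarrow> real^'n"
    and w wsq :: "real^'n"
    and gb :: "int \<Rightarrow> 'w \<Rightarrow> real"
    and theta :: "'w \<Rightarrow> 'w"
  assumes prob: "prob_space M"
    and S_meas: "\<forall>s. S s \<in> M \<rightarrow>\<^sub>M count_space UNIV"
    and A_meas: "\<forall>s. A s \<in> M \<rightarrow>\<^sub>M count_space UNIV"
    and R_meas: "\<forall>s. R s \<in> borel_measurable M"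
    and markov: "\<forall>s Y. Y \<in> borel_measurable (future M S A R s) \<longrightarrow> integrable M Y \<longrightarrow>
          (AE \<omega> in M. real_cond_exp M (hist M S A R s) Y \<omega>
                        = real_cond_exp M (state_sigma M S A R s) Y \<omega>)"
    and shift_meas: "theta \<in> M \<rightarrow>\<^sub>M M"
    and shift_preserving: "distr M M theta = M"
    and shift_process: "\<forall>s. \<forall>\<omega>\<in>space M.
          S (s+1) \<omega> = S s (theta \<omega>) \<and> A (s+1) \<omega> = A s (theta \<omega>) \<and> R (s+1) \<omega> = R s (theta \<omega>)"
    and unbiased: "\<forall>s. AE \<omega> in M.
          real_cond_exp M (hist M S A R s) (gb s) \<omega>
            = real_cond_exp M (state_sigma M S A R s) (Glam ppi mu gam lam x w S A R s) \<omega>"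
    and well_defined: "\<forall>s. \<forall>\<omega>\<in>space M.
          summable (Glam_term ppi mu gam lam x w S A R s \<omega>)
          \<and> summable (Vbar_term ppi mu gam lam lamb x w wsq S A R s \<omega>)
          \<and> summable (\<lambda>k. \<bar>trace_coef ppi mu gam lam lamb S A s \<omega> k\<bar> * norm (x (S (s - int k) \<omega>)))"
    and finite_expectations: "\<forall>s.
          integrable M (Glam ppi mu gam lam x w S A R s)
          \<and> integrable M (gb s)
          \<and> integrable M (abs_trace ppi mu gam lam lamb x S A s)
          \<and> integrable M (\<lambda>\<omega>. \<bar>Vbar ppi mu gam lam lamb x w wsq S A R s \<omega>\<bar>
                                * abs_trace ppi mu gam lam lamb x S A s \<omega>)
          \<and> integrable M (\<lambda>\<omega>. (rho ppi mu S A s \<omega>)\<^sup>2 * (Gbar gam lam x w S R s \<omega>)\<^sup>2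
                                * abs_trace ppi mu gam lam lamb x S A s \<omega>)
          \<and> integrable M (\<lambda>\<omega>. \<bar>(rho ppi mu S A s \<omega>)\<^sup>2 * gam (S (s+1) \<omega>) * lam (S (s+1) \<omega>)
                                   * Gbar gam lam x w S R s \<omega> * Glam ppi mu gam lam x w S A R (s+1) \<omega>\<bar>
                                * abs_trace ppi mu gam lam lamb x S A s \<omega>)
          \<and> integrable M (\<lambda>\<omega>. \<bar>(rho ppi mu S A s \<omega>)\<^sup>2 * gam (S (s+1) \<omega>) * lam (S (s+1) \<omega>)
                                   * Gbar gam lam x w S R s \<omega> * gb (s+1) \<omega>\<bar>
                                * abs_trace ppi mu gam lam lamb x S A s \<omega>)"
begin

abbreviation "Gl \<equiv> Glam ppi mu gam lam x w S A R"
abbreviation "V \<equiv> Vbar ppi mu gam lam lamb x w wsq S A R"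
abbreviation "\<delta> \<equiv> delta_lamb ppi mu gam lam lamb x w wsq S A R"
abbreviation "\<delta>bar \<equiv> delta_bar ppi mu gam lam x w wsq S A R"
abbreviation "coef \<equiv> trace_coef ppi mu gam lam lamb S A"
abbreviation "z \<equiv> zbar ppi mu gam lam lamb x S A"
abbreviation "trace_norm \<equiv> abs_trace ppi mu gam lam lamb x S A"
abbreviation "decay s \<omega> \<equiv> gambar ppi mu gam lam S A s \<omega> * lamb (S s \<omega>)"
abbreviation "weight t \<omega> \<equiv>
  (rho ppi mu S A t \<omega>)\<^sup>2 * gam (S (t+1) \<omega>) * lam (S (t+1) \<omega>) * Gbar gam lam x w S R t \<omega>"

lemma measurable_S [measurable]: "S s \<in> M \<rightarrow>\<^sub>M count_space UNIV"
  using S_meas by blast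

lemma measurable_A [measurable]: "A s \<in> M \<rightarrow>\<^sub>M count_space UNIV"
  using A_meas by blast

lemma measurable_R [measurable]: "R s \<in> borel_measurable M"
  using R_meas by blast

lemma borel_measurable_returns [measurable]:
  "rho ppi mu S A s \<in> borel_measurable M"
  "Gbar gam lam x w S R s \<in> borel_measurable M"
  "gambar ppi mu gam lam S A s \<in> borel_measurable M"
  "Gl s \<in> borel_measurable M"
  "(\<lambda>\<omega>. coef s \<omega> k) \<in> borel_measurable M"
  "z s \<in> borel_measurable M"
  by (auto intro: borel_measurable_rho borel_measurable_Gbar borel_measurable_gambar
      borel_measurable_Glam borel_measurable_trace_coef borel_measurable_zbar)

lemma borel_measurable_V [measurable]: "V s \<in> borel_measurable M"
  unfolding Vbar_def Vbar_term_def rbar_def by measurable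

lemma borel_measurable_trace_norm [measurable]: "trace_norm s \<in> borel_measurable M"
  unfolding abs_trace_def by measurable

lemma borel_measurable_gb [measurable]: "gb s \<in> borel_measurable M"
  using finite_expectations by blast

lemma borel_measurable_\<delta> [measurable]: "\<delta> s \<in> borel_measurable M"
  unfolding delta_lamb_def by measurable

lemma borel_measurable_\<delta>bar [measurable]:
  assumes [measurable]: "\<And>s. g s \<in> borel_measurable M"
  shows "\<delta>bar g s \<in> borel_measurable M"
  unfolding delta_bar_def by measurable

lemma shift_S: "\<omega> \<in> space M \<Longrightarrow> S s (theta \<omega>) = S (s+1) \<omega>"
  and shift_A: "\<omega> \<in> space M \<Longrightarrow> A s (theta \<omega>) = A (s+1) \<omega>"
  and shift_R: "\<omega> \<in> space M \<Longrightarrow> R s (theta \<omega>) = R (s+1) \<omega>"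
  using shift_process by simp_all

lemma V_shift:
  assumes "\<omega> \<in> space M"
  shows "V t (theta \<omega>) = V (t+1) \<omega>"
proof -
  have "Vbar_term ppi mu gam lam lamb x w wsq S A R t (theta \<omega>)
      = Vbar_term ppi mu gam lam lamb x w wsq S A R (t+1) \<omega>"
    by (rule ext, rule Vbar_term_shift) (simp_all add: assms shift_S shift_A shift_R)
  then show ?thesis by (simp add: Vbar_def)
qed

lemma coef_shift:
  assumes "\<omega> \<in> space M"
  shows "coef t (theta \<omega>) k = coef (t+1) \<omega> k"
  by (rule trace_coef_shift) (simp_all add: assms shift_S shift_A)

lemma V_rec:
  assumes "\<omega> \<in> space M"
  shows "V t \<omega> = Vbar_term ppi mu gam lam lamb x w wsq S A R t \<omega> 0 + decay (t+1) \<omega> * V (t+1) \<omega>"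
proof -
  have summable: "summable (Vbar_term ppi mu gam lam lamb x w wsq S A R s \<omega>)" for s
    using well_defined assms by blast
  have "V t \<omega> = Vbar_term ppi mu gam lam lamb x w wsq S A R t \<omega> 0
      + (\<Sum>k. Vbar_term ppi mu gam lam lamb x w wsq S A R t \<omega> (Suc k))"
    unfolding Vbar_def by (simp add: suminf_split_head[OF summable])
  also have "(\<Sum>k. Vbar_term ppi mu gam lam lamb x w wsq S A R t \<omega> (Suc k)) = decay (t+1) \<omega> * V (t+1) \<omega>"
    unfolding Vbar_term_Suc Vbar_def by (rule suminf_mult[OF summable])
  finally show ?thesis .
qed

lemma \<delta>_rec:
  assumes "\<omega> \<in> space M"
  shows "\<delta> t \<omega> = \<delta>bar Gl t \<omega> + decay (t+1) \<omega> * \<delta> (t+1) \<omega>"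
  unfolding delta_lamb_def delta_bar_def V_rec[OF assms, of t]
  by (simp add: Vbar_term_def rbar_def algebra_simps)

lemma summable_trace:
  assumes "\<omega> \<in> space M"
  shows "summable (\<lambda>k. \<bar>coef t \<omega> k\<bar> * norm (x (S (t - int k) \<omega>)))"
  using well_defined assms by blast

lemma trace_norm_nonneg:
  assumes "\<omega> \<in> space M"
  shows "0 \<le> trace_norm t \<omega>"
  unfolding abs_trace_def using summable_trace[OF assms] by (simp add: suminf_nonneg)

lemma norm_z_le_trace_norm:
  assumes "\<omega> \<in> space M"
  shows "norm (z t \<omega>) \<le> trace_norm t \<omega>"
  unfolding zbar_def abs_trace_def
  using summable_norm[of "\<lambda>k. coef t \<omega> k *\<^sub>R x (S (t - int k) \<omega>)"] summable_trace[OF assms]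
  by simp

lemma integrable_scaleR_trace_norm_bound:
  fixes f :: "'w \<Rightarrow> real" and v :: "'w \<Rightarrow> real^'n"
  assumes [measurable]: "f \<in> borel_measurable M" "v \<in> borel_measurable M"
    and integrable: "integrable M (\<lambda>\<omega>. \<bar>f \<omega>\<bar> * trace_norm t \<omega>)"
    and bound: "\<And>\<omega>. \<omega> \<in> space M \<Longrightarrow> norm (v \<omega>) \<le> trace_norm t \<omega>"
  shows "integrable M (\<lambda>\<omega>. f \<omega> *\<^sub>R v \<omega>)"
proof (rule Bochner_Integration.integrable_bound[OF integrable])
  show "AE \<omega> in M. norm (f \<omega> *\<^sub>R v \<omega>) \<le> norm (\<bar>f \<omega>\<bar> * trace_norm t \<omega>)"
    using bound trace_norm_nonneg by (intro AE_I2) (simp add: abs_mult mult_left_mono)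
qed measurable

lemma integrable_abs_mult_trace_norm:
  assumes [measurable]: "f \<in> borel_measurable M"
    and integrable: "integrable M (\<lambda>\<omega>. g \<omega> * trace_norm t \<omega>)"
    and bound: "\<And>\<omega>. \<omega> \<in> space M \<Longrightarrow> \<bar>f \<omega>\<bar> \<le> g \<omega>"
  shows "integrable M (\<lambda>\<omega>. \<bar>f \<omega>\<bar> * trace_norm t \<omega>)"
proof (rule Bochner_Integration.integrable_bound[OF integrable])
  show "AE \<omega> in M. norm (\<bar>f \<omega>\<bar> * trace_norm t \<omega>) \<le> norm (g \<omega> * trace_norm t \<omega>)"
  proof (rule AE_I2)
    fix \<omega> assume \<omega>: "\<omega> \<in> space M"
    have "0 \<le> g \<omega>"
      using bound[OF \<omega>] by (meson abs_ge_zero order_trans)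
    then show "norm (\<bar>f \<omega>\<bar> * trace_norm t \<omega>) \<le> norm (g \<omega> * trace_norm t \<omega>)"
      using mult_right_mono[OF bound[OF \<omega>] trace_norm_nonneg[OF \<omega>, of t]] trace_norm_nonneg[OF \<omega>, of t]
      by (simp add: abs_mult)
  qed
qed measurable

lemma integrable_\<delta>_trace_norm: "integrable M (\<lambda>\<omega>. \<bar>\<delta> t \<omega>\<bar> * trace_norm t \<omega>)"
proof (rule integrable_abs_mult_trace_norm)
  define C where "C = (\<Sum>s\<in>UNIV. \<bar>x s \<bullet> wsq\<bar>)"
  show "\<bar>\<delta> t \<omega>\<bar> \<le> \<bar>V t \<omega>\<bar> + C" for \<omega>
    using member_le_sum[of "S t \<omega>" UNIV "\<lambda>s. \<bar>x s \<bullet> wsq\<bar>"]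
    unfolding delta_lamb_def C_def by simp
  show "integrable M (\<lambda>\<omega>. (\<bar>V t \<omega>\<bar> + C) * trace_norm t \<omega>)"
    using finite_expectations by (simp add: distrib_right)
qed measurable

lemma integrable_\<delta>bar_trace_norm:
  assumes [measurable]: "\<And>s. g s \<in> borel_measurable M"
    and integrable_g: "integrable M (\<lambda>\<omega>. \<bar>weight t \<omega> * g (t+1) \<omega>\<bar> * trace_norm t \<omega>)"
  shows "integrable M (\<lambda>\<omega>. \<bar>\<delta>bar g t \<omega>\<bar> * trace_norm t \<omega>)"
proof (rule integrable_abs_mult_trace_norm)
  \<comment> \<open>Apart from the return terms, \<open>\<delta>bar\<close> is a function of the finitely-valued triple
    \<open>(S\<^sub>t, A\<^sub>t, S\<^sub>t\<^sub>+\<^sub>1)\<close>, hence bounded.\<close>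
  define F where "F = (\<lambda>(s, a, s'). (ppi s a / mu s a)\<^sup>2 * (gam s')\<^sup>2 * (lam s')\<^sup>2 * (x s' \<bullet> wsq) - x s \<bullet> wsq)"
  define C where "C = (\<Sum>y\<in>UNIV. \<bar>F y\<bar>)"
  let ?G = "\<lambda>\<omega>. (rho ppi mu S A t \<omega>)\<^sup>2 * (Gbar gam lam x w S R t \<omega>)\<^sup>2"
  show "\<bar>\<delta>bar g t \<omega>\<bar> \<le> ?G \<omega> + 2 * \<bar>weight t \<omega> * g (t+1) \<omega>\<bar> + C" for \<omega>
  proof -
    have "\<delta>bar g t \<omega> = ?G \<omega> + 2 * (weight t \<omega> * g (t+1) \<omega>) + F (S t \<omega>, A t \<omega>, S (t+1) \<omega>)"
      unfolding delta_bar_def F_def gambar_def rho_def by (simp add: power_mult_distrib algebra_simps)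
    moreover have "\<bar>F (S t \<omega>, A t \<omega>, S (t+1) \<omega>)\<bar> \<le> C"
      unfolding C_def by (rule member_le_sum) simp_all
    moreover have "0 \<le> ?G \<omega>" by simp
    ultimately show ?thesis by linarith
  qed
  have "integrable M (\<lambda>\<omega>. ?G \<omega> * trace_norm t \<omega>)" "integrable M (trace_norm t)"
    using finite_expectations by blast+
  with integrable_g show "integrable M (\<lambda>\<omega>. (?G \<omega> + 2 * \<bar>weight t \<omega> * g (t+1) \<omega>\<bar> + C) * trace_norm t \<omega>)"
    by (simp add: distrib_right mult.assoc)
qed measurable

lemma \<delta>_shift:
  assumes "\<omega> \<in> space M"
  shows "\<delta> t (theta \<omega>) = \<delta> (t+1) \<omega>"
  unfolding delta_lamb_def using assms by (simp add: V_shift shift_S)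

lemma integral_\<delta>_eq_backward_view:
  "(\<integral>\<omega>. \<delta> t \<omega> *\<^sub>R x (S t \<omega>) \<partial>M) = (\<integral>\<omega>. \<delta>bar Gl t \<omega> *\<^sub>R z t \<omega> \<partial>M)"
proof -
  have "(\<integral>\<omega>. \<delta> t \<omega> *\<^sub>R x (S (t - int 0) \<omega>) \<partial>M)
      = (\<integral>\<omega>. \<delta>bar Gl t \<omega> *\<^sub>R (\<Sum>k. coef t \<omega> k *\<^sub>R x (S (t - int k) \<omega>)) \<partial>M)"
  proof (rule stationary_forward_view_eq_backward_view[OF shift_meas shift_preserving,
        where b = "decay (t+1)" and c = "\<lambda>k \<omega>. coef t \<omega> k" and v = "\<lambda>k \<omega>. x (S (t - int k) \<omega>)"])
    fix \<omega> k assume \<omega>: "\<omega> \<in> space M"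
    show "\<delta> t \<omega> = \<delta>bar Gl t \<omega> + decay (t+1) \<omega> * \<delta> t (theta \<omega>)"
      using \<delta>_rec[OF \<omega>, of t] \<delta>_shift[OF \<omega>, of t] by simp
    show "coef t \<omega> 0 = 1"
      by (simp add: trace_coef_def)
    show "coef t (theta \<omega>) (Suc k) = decay (t+1) \<omega> * coef t \<omega> k"
      using coef_shift[OF \<omega>] trace_coef_Suc[of ppi mu gam lam lamb S A "t+1" \<omega> k] by simp
    show "x (S (t - int (Suc k)) (theta \<omega>)) = x (S (t - int k) \<omega>)"
      using shift_S[OF \<omega>, of "t - int (Suc k)"] by (simp add: algebra_simps)
    show "summable (\<lambda>k. \<bar>coef t \<omega> k\<bar> * norm (x (S (t - int k) \<omega>)))"
      by (rule summable_trace[OF \<omega>])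
  next
    show "integrable M (\<lambda>\<omega>. \<bar>\<delta> t \<omega>\<bar> * (\<Sum>k. \<bar>coef t \<omega> k\<bar> * norm (x (S (t - int k) \<omega>))))"
      using integrable_\<delta>_trace_norm unfolding abs_trace_def .
    show "integrable M (\<lambda>\<omega>. \<bar>\<delta>bar Gl t \<omega>\<bar> * (\<Sum>k. \<bar>coef t \<omega> k\<bar> * norm (x (S (t - int k) \<omega>))))"
      using integrable_\<delta>bar_trace_norm[of Gl] finite_expectations unfolding abs_trace_def by simp
  qed measurable
  then show ?thesis
    by (simp add: zbar_def)
qed

lemma sigma_finite_subalgebra_hist: "sigma_finite_subalgebra M (hist M S A R s)"
proof (rule finite_measure_subalgebra_is_sigma_finite)
  have "subalgebra M (hist M S A R s)"
    unfolding hist_def by (rule subalgebra_gen_sigma) simp_all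
  then show "finite_measure_subalgebra M (hist M S A R s)"
    unfolding finite_measure_subalgebra_def finite_measure_subalgebra_axioms_def
    using prob prob_space.finite_measure by blast
qed

lemma weight_hist_measurable: "weight t \<in> borel_measurable (hist M S A R (t+1))"
proof -
  have [measurable]: "S k \<in> hist M S A R (t+1) \<rightarrow>\<^sub>M count_space UNIV" if "k \<le> t+1" for k
    unfolding hist_def using that by (intro measurable_gen_sigma_S) simp
  have [measurable]: "rho ppi mu S A t \<in> borel_measurable (hist M S A R (t+1))"
    unfolding hist_def by (intro borel_measurable_rho measurable_gen_sigma_S measurable_gen_sigma_A) simp_all
  have [measurable]: "Gbar gam lam x w S R t \<in> borel_measurable (hist M S A R (t+1))"
    unfolding hist_def by (intro borel_measurable_Gbar measurable_gen_sigma_S measurable_gen_sigma_R) simp_all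
  show ?thesis by measurable
qed

lemma z_hist_measurable: "z t \<in> borel_measurable (hist M S A R (t+1))"
  unfolding hist_def by (intro borel_measurable_zbar measurable_gen_sigma_S measurable_gen_sigma_A) simp_all

lemma cond_exp_estimate_eq_Glam:
  "AE \<omega> in M. real_cond_exp M (hist M S A R s) (gb s) \<omega> = real_cond_exp M (hist M S A R s) (Gl s) \<omega>"
proof -
  have "Gl s \<in> borel_measurable (future M S A R s)"
    unfolding future_def
    by (intro borel_measurable_Glam measurable_gen_sigma_S measurable_gen_sigma_A measurable_gen_sigma_R) simp_all
  moreover have "integrable M (Gl s)"
    using finite_expectations by blast
  ultimately have "AE \<omega> in M. real_cond_exp M (hist M S A R s) (Gl s) \<omega>
      = real_cond_exp M (state_sigma M S A R s) (Gl s) \<omega>"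
    using markov by blast
  moreover have "AE \<omega> in M. real_cond_exp M (hist M S A R s) (gb s) \<omega>
      = real_cond_exp M (state_sigma M S A R s) (Gl s) \<omega>"
    using unbiased by blast
  ultimately show ?thesis
    by eventually_elim simp
qed

lemma integrable_\<delta>bar_scaleR_z:
  assumes [measurable]: "\<And>s. g s \<in> borel_measurable M"
    and "integrable M (\<lambda>\<omega>. \<bar>weight t \<omega> * g (t+1) \<omega>\<bar> * trace_norm t \<omega>)"
  shows "integrable M (\<lambda>\<omega>. \<delta>bar g t \<omega> *\<^sub>R z t \<omega>)"
proof (rule integrable_scaleR_trace_norm_bound)
  show "integrable M (\<lambda>\<omega>. \<bar>\<delta>bar g t \<omega>\<bar> * trace_norm t \<omega>)"
    using assms by (rule integrable_\<delta>bar_trace_norm)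
qed (simp_all add: norm_z_le_trace_norm)

text \<open>The coefficient of the estimate and the trace are measurable with respect to the history at
  time \<open>t+1\<close>, so only the conditional expectation of the estimate given that history matters.\<close>
lemma integral_\<delta>bar_estimate_eq:
  "(\<integral>\<omega>. \<delta>bar gb t \<omega> *\<^sub>R z t \<omega> \<partial>M) = (\<integral>\<omega>. \<delta>bar Gl t \<omega> *\<^sub>R z t \<omega> \<partial>M)"
proof -
  interpret hist: sigma_finite_subalgebra M "hist M S A R (t+1)"
    by (rule sigma_finite_subalgebra_hist)
  define f where "f \<omega> = (2 * weight t \<omega>) *\<^sub>R z t \<omega>" for \<omega>
  have f_hist: "f \<in> borel_measurable (hist M S A R (t+1))"
    unfolding f_def using weight_hist_measurable z_hist_measurable by measurable
  have integrable_estimates: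
    "integrable M (\<lambda>\<omega>. \<delta>bar g t \<omega> *\<^sub>R z t \<omega>)" "integrable M (\<lambda>\<omega>. g (t+1) \<omega> *\<^sub>R f \<omega>)"
    if "g = gb \<or> g = Gl" for g
  proof -
    have [measurable]: "g s \<in> borel_measurable M" for s
      using that by auto
    have integrable_g: "integrable M (\<lambda>\<omega>. \<bar>weight t \<omega> * g (t+1) \<omega>\<bar> * trace_norm t \<omega>)"
      using that finite_expectations by auto
    then show "integrable M (\<lambda>\<omega>. \<delta>bar g t \<omega> *\<^sub>R z t \<omega>)"
      by (intro integrable_\<delta>bar_scaleR_z) measurable
    have "integrable M (\<lambda>\<omega>. (2 * (weight t \<omega> * g (t+1) \<omega>)) *\<^sub>R z t \<omega>)"
      using integrable_g norm_z_le_trace_norm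
      by (intro integrable_scaleR_trace_norm_bound) (auto simp: abs_mult mult.assoc)
    then show "integrable M (\<lambda>\<omega>. g (t+1) \<omega> *\<^sub>R f \<omega>)"
      by (simp add: f_def mult_ac)
  qed
  have "(\<integral>\<omega>. \<delta>bar gb t \<omega> *\<^sub>R z t \<omega> \<partial>M)
      = (\<integral>\<omega>. \<delta>bar Gl t \<omega> *\<^sub>R z t \<omega> + (gb (t+1) \<omega> *\<^sub>R f \<omega> - Gl (t+1) \<omega> *\<^sub>R f \<omega>) \<partial>M)"
    unfolding delta_bar_def f_def by (rule Bochner_Integration.integral_cong) (simp_all add: algebra_simps)
  also have "\<dots> = (\<integral>\<omega>. \<delta>bar Gl t \<omega> *\<^sub>R z t \<omega> \<partial>M)
      + ((\<integral>\<omega>. gb (t+1) \<omega> *\<^sub>R f \<omega> \<partial>M) - (\<integral>\<omega>. Gl (t+1) \<omega> *\<^sub>R f \<omega> \<partial>M))"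
    using integrable_estimates by simp
  also have "(\<integral>\<omega>. gb (t+1) \<omega> *\<^sub>R f \<omega> \<partial>M) = (\<integral>\<omega>. Gl (t+1) \<omega> *\<^sub>R f \<omega> \<partial>M)"
    using integrable_estimates cond_exp_estimate_eq_Glam
    by (intro hist.integral_scaleR_eq_of_real_cond_exp_eq[OF f_hist]) auto
  finally show ?thesis by simp
qed

end

theorem theorem1:
  fixes M :: "'w measure"
    and S :: "int \<Rightarrow> 'w \<Rightarrow> 's::finite"
    and A :: "int \<Rightarrow> 'w \<Rightarrow> 'a::finite"
    and R :: "int \<Rightarrow> 'w \<Rightarrow> real"
    and P :: "'s \<Rightarrow> 'a \<Rightarrow> 's \<Rightarrow> real"
    and ppi mu :: "'s \<Rightarrow> 'a \<Rightarrow> real"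
    and gam lam lamb :: "'s \<Rightarrow> real"
    and x :: "'s \<Rightarrow> real^'n"
    and w wsq :: "real^'n"
    and gb :: "int \<Rightarrow> 'w \<Rightarrow> real"
    and theta :: "'w \<Rightarrow> 'w"
    and t :: int
  assumes prob: "prob_space M"
    and S_meas: "\<forall>s. S s \<in> M \<rightarrow>\<^sub>M count_space UNIV"
    and A_meas: "\<forall>s. A s \<in> M \<rightarrow>\<^sub>M count_space UNIV"
    and R_meas: "\<forall>s. R s \<in> borel_measurable M"
    and pi_policy: "\<forall>s a. 0 \<le> ppi s a" "\<forall>s. (\<Sum>a\<in>UNIV. ppi s a) = 1"
    and mu_policy: "\<forall>s a. 0 \<le> mu s a" "\<forall>s. (\<Sum>a\<in>UNIV. mu s a) = 1"
    and coverage: "\<forall>s a. 0 < ppi s a \<longrightarrow> 0 < mu s a"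
    and P_kernel: "\<forall>s a s'. 0 \<le> P s a s'" "\<forall>s a. (\<Sum>s'\<in>UNIV. P s a s') = 1"
    and gam_range: "\<forall>s. 0 \<le> gam s \<and> gam s \<le> 1"
    and lam_range: "\<forall>s. 0 \<le> lam s \<and> lam s \<le> 1"
    and lamb_range: "\<forall>s. 0 \<le> lamb s \<and> lamb s \<le> 1"
    and behaviour: "\<forall>s a. AE \<omega> in M.
          real_cond_exp M (hist M S A R s) (\<lambda>\<omega>. indicator {a} (A s \<omega>)) \<omega> = mu (S s \<omega>) a"
    and transition: "\<forall>s s'. AE \<omega> in M.
          real_cond_exp M (histA M S A R s) (\<lambda>\<omega>. indicator {s'} (S (s+1) \<omega>)) \<omega>
            = P (S s \<omega>) (A s \<omega>) s'"
    and markov: "\<forall>s Y. Y \<in> borel_measurable (future M S A R s) \<longrightarrow> integrable M Y \<longrightarrow>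
          (AE \<omega> in M. real_cond_exp M (hist M S A R s) Y \<omega>
                        = real_cond_exp M (state_sigma M S A R s) Y \<omega>)"
    and shift_meas: "theta \<in> M \<rightarrow>\<^sub>M M"
    and shift_preserving: "distr M M theta = M"
    and shift_process: "\<forall>s. \<forall>\<omega>\<in>space M.
          S (s+1) \<omega> = S s (theta \<omega>) \<and> A (s+1) \<omega> = A s (theta \<omega>) \<and> R (s+1) \<omega> = R s (theta \<omega>)"
    and unbiased: "\<forall>s. AE \<omega> in M.
          real_cond_exp M (hist M S A R s) (gb s) \<omega>
            = real_cond_exp M (state_sigma M S A R s) (Glam ppi mu gam lam x w S A R s) \<omega>"
    and well_defined: "\<forall>s. \<forall>\<omega>\<in>space M.
          summable (Glam_term ppi mu gam lam x w S A R s \<omega>)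
          \<and> summable (Vbar_term ppi mu gam lam lamb x w wsq S A R s \<omega>)
          \<and> summable (\<lambda>k. \<bar>trace_coef ppi mu gam lam lamb S A s \<omega> k\<bar> * norm (x (S (s - int k) \<omega>)))"
    and finite_expectations: "\<forall>s.
          integrable M (Glam ppi mu gam lam x w S A R s)
          \<and> integrable M (gb s)
          \<and> integrable M (abs_trace ppi mu gam lam lamb x S A s)
          \<and> integrable M (\<lambda>\<omega>. \<bar>Vbar ppi mu gam lam lamb x w wsq S A R s \<omega>\<bar>
                                * abs_trace ppi mu gam lam lamb x S A s \<omega>)
          \<and> integrable M (\<lambda>\<omega>. (rho ppi mu S A s \<omega>)\<^sup>2 * (Gbar gam lam x w S R s \<omega>)\<^sup>2
                                * abs_trace ppi mu gam lam lamb x S A s \<omega>)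
          \<and> integrable M (\<lambda>\<omega>. \<bar>(rho ppi mu S A s \<omega>)\<^sup>2 * gam (S (s+1) \<omega>) * lam (S (s+1) \<omega>)
                                   * Gbar gam lam x w S R s \<omega> * Glam ppi mu gam lam x w S A R (s+1) \<omega>\<bar>
                                * abs_trace ppi mu gam lam lamb x S A s \<omega>)
          \<and> integrable M (\<lambda>\<omega>. \<bar>(rho ppi mu S A s \<omega>)\<^sup>2 * gam (S (s+1) \<omega>) * lam (S (s+1) \<omega>)
                                   * Gbar gam lam x w S R s \<omega> * gb (s+1) \<omega>\<bar>
                                * abs_trace ppi mu gam lam lamb x S A s \<omega>)"
  shows "(\<integral>\<omega>. delta_lamb ppi mu gam lam lamb x w wsq S A R t \<omega> *\<^sub>R x (S t \<omega>) \<partial>M)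
         = (\<integral>\<omega>. delta_bar ppi mu gam lam x w wsq S A R gb t \<omega> *\<^sub>R zbar ppi mu gam lam lamb x S A t \<omega> \<partial>M)"
proof -
  interpret squared_return_process M S A R ppi mu gam lam lamb x w wsq gb theta
    by (rule squared_return_process.intro[OF prob S_meas A_meas R_meas markov shift_meas
          shift_preserving shift_process unbiased well_defined finite_expectations])
  show ?thesis
    using integral_\<delta>_eq_backward_view integral_\<delta>bar_estimate_eq by simp
qed

end
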